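(* Let $d\ge2$ and, for $\ell\ge0$, let $P_\ell:[-1,1]\to\mathbb R$ be the Legendre polynomial of degree $\ell$ in dimension $d$, normalized by $P_\ell(1)=1$. Let $\lambda_\ell=\ell(d+\ell-2)$. Then for all $x\in[-1,1]$ and all integers $\ell\ge1$, \[ 1-P_{2\ell}(x)\le\frac{\lambda_{2\ell}}{\lambda_2}\big(1-P_2(x)\big). \]
   Context: The Legendre polynomial $P_\ell$ in dimension $d$ is the polynomial such that $\sigma\mapsto P_\ell(e_1\cdot\sigma)$ is the unique spherical harmonic of degree $\ell$ on $S^{d-1}$ (restriction of an $\ell$-homogeneous harmonic polynomial on $\mathbb R^d$) invariant under rotations fixing $e_1$ with value $1$ at $e_1$; for $d=2$, $P_\ell(\cos\theta)=\cos(\ell\theta)$. Then $-\Delta_{S^{d-1}}Y=\lambda_\ell Y$ for $Y(\sigma)=P_\ell(e_1\cdot\sigma)$. *)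

theory Defs
  imports "HOL-Analysis.Analysis" "HOL-Computational_Algebra.Polynomial"
begin

definition poly_fun :: "(real^'n::finite \<Rightarrow> real) \<Rightarrow> bool" where
  "poly_fun H \<longleftrightarrow> (\<exists>c :: ('n \<Rightarrow> nat) \<Rightarrow> real. finite {\<alpha>. c \<alpha> \<noteq> 0} \<and>
     (\<forall>x. H x = (\<Sum>\<alpha>\<in>{\<alpha>. c \<alpha> \<noteq> 0}. c \<alpha> * (\<Prod>i\<in>UNIV. (x $ i) ^ (\<alpha> i)))))"

definition homogeneous_of_degree :: "nat \<Rightarrow> (real^'n \<Rightarrow> real) \<Rightarrow> bool" where
  "homogeneous_of_degree l H \<longleftrightarrow> (\<forall>t x. H (t *\<^sub>R x) = t ^ l * H x)"

definition laplacian :: "(real^'n::finite \<Rightarrow> real) \<Rightarrow> real^'n \<Rightarrow> real" where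
  "laplacian H x = (\<Sum>i\<in>UNIV. deriv (\<lambda>s. deriv (\<lambda>t. H (x + t *\<^sub>R axis i 1)) s) 0)"

definition harmonic :: "(real^'n::finite \<Rightarrow> real) \<Rightarrow> bool" where
  "harmonic H \<longleftrightarrow> (\<forall>x. laplacian H x = 0)"

text \<open>The distinguished first coordinate index e_1 (any fixed index).\<close>
definition first_index :: "'n itself \<Rightarrow> 'n" where
  "first_index _ = (SOME i. True)"

definition legendre_poly :: "'n::finite itself \<Rightarrow> nat \<Rightarrow> real poly" where
  "legendre_poly T l = (THE p. poly p 1 = 1 \<and>
     (\<exists>H :: real^'n \<Rightarrow> real. poly_fun H \<and> homogeneous_of_degree l H \<and> harmonic H \<and>
        (\<forall>\<sigma>. norm \<sigma> = 1 \<longrightarrow> H \<sigma> = poly p (\<sigma> $ first_index T))))"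

definition legendre :: "'n::finite itself \<Rightarrow> nat \<Rightarrow> real \<Rightarrow> real" where
  "legendre T l x = poly (legendre_poly T l) x"

definition sph_eigenvalue :: "nat \<Rightarrow> nat \<Rightarrow> real" where
  "sph_eigenvalue d l = real l * (real d + real l - 2)"

end

theory Submission
  imports Defs
begin

(* The zonal harmonic of degree 2l is sum_k e_k x_1^(2k) |x'|^(2(l-k)), where x' collects the
   coordinates other than the first and harmonicity forces a two-term recurrence on the e_k.
   Hence P_(2l)(x) = R(x^2) with R(y) = sum_k e_k y^k (1-y)^(l-k), and on the sphere the Laplacian
   becomes the Legendre equation 2y(1-y) R'' + (1-dy) R' + kappa R = 0, kappa = lambda_(2l)/2.
   Differentiating, S = R' satisfies an equation for which the energy S^2 + 2y(1-y) S'^2/(kappa-d)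
   decreases up to y = 2/(d+2) and increases afterwards; so on [0,1] the square of S is bounded by
   its values at the endpoints, and the recurrence gives |S(0)| <= S(1) = kappa/(d-1).
   Integrating from y = x^2 to 1 yields 1 - P_(2l)(x) <= kappa/(d-1) (1 - x^2), which is the
   claim because 1 - P_2(x) = d/(d-1) (1 - x^2) and lambda_2 = 2d. *)

section \<open>Polynomial functions and homogeneity\<close>

definition vec_monomial :: "('n::finite \<Rightarrow> nat) \<Rightarrow> real^'n \<Rightarrow> real" where
  "vec_monomial \<alpha> x = (\<Prod>i\<in>UNIV. (x $ i) ^ \<alpha> i)"

lemma vec_monomial_add: "vec_monomial (\<lambda>i. \<alpha> i + \<beta> i) x = vec_monomial \<alpha> x * vec_monomial \<beta> x"
  by (simp add: vec_monomial_def power_add prod.distrib)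

lemma poly_funI:
  fixes H :: "real^'n::finite \<Rightarrow> real"
  assumes fin: "finite I" and H: "\<And>x. H x = (\<Sum>i\<in>I. a i * vec_monomial (\<alpha> i) x)"
  shows "poly_fun H"
proof -
  define c where "c \<gamma> = (\<Sum>i\<in>{i\<in>I. \<alpha> i = \<gamma>}. a i)" for \<gamma>
  have supp: "{\<gamma>. c \<gamma> \<noteq> 0} \<subseteq> \<alpha> ` I"
    unfolding c_def by (force intro: sum.neutral)
  have "H x = (\<Sum>\<gamma>\<in>{\<gamma>. c \<gamma> \<noteq> 0}. c \<gamma> * vec_monomial \<gamma> x)" for x
  proof -
    have "H x = (\<Sum>\<gamma>\<in>\<alpha> ` I. \<Sum>i\<in>{i\<in>I. \<alpha> i = \<gamma>}. a i * vec_monomial (\<alpha> i) x)"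
      using H sum.group[OF fin finite_imageI[OF fin], where g=\<alpha> and h="\<lambda>i. a i * vec_monomial (\<alpha> i) x"]
      by simp
    also have "\<dots> = (\<Sum>\<gamma>\<in>\<alpha> ` I. c \<gamma> * vec_monomial \<gamma> x)"
      unfolding c_def sum_distrib_right by (intro sum.cong refl) auto
    also have "\<dots> = (\<Sum>\<gamma>\<in>{\<gamma>. c \<gamma> \<noteq> 0}. c \<gamma> * vec_monomial \<gamma> x)"
      by (rule sum.mono_neutral_right[OF finite_imageI[OF fin] supp]) auto
    finally show ?thesis .
  qed
  then show ?thesis
    using finite_subset[OF supp finite_imageI[OF fin]]
    unfolding poly_fun_def vec_monomial_def by blast
qed

lemma poly_funE:
  assumes "poly_fun H"
  obtains S c where "finite S" "\<And>x. H x = (\<Sum>\<alpha>\<in>S. c \<alpha> * vec_monomial \<alpha> x)"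
  using assms unfolding poly_fun_def vec_monomial_def by blast

lemma poly_fun_const: "poly_fun (\<lambda>x::real^'n::finite. a)"
  by (rule poly_funI[where I="{()}" and a="\<lambda>_. a" and \<alpha>="\<lambda>_ _. 0"]) (auto simp: vec_monomial_def)

lemma poly_fun_coord: "poly_fun (\<lambda>x::real^'n::finite. x $ j)"
proof (rule poly_funI[where I="{()}" and a="\<lambda>_. 1" and \<alpha>="\<lambda>_ i. if i = j then 1 else 0"])
  fix x :: "real^'n"
  have "vec_monomial (\<lambda>i. if i = j then 1 else 0) x = (\<Prod>i\<in>UNIV. if i = j then x $ i else 1)"
    unfolding vec_monomial_def by (intro prod.cong) auto
  then show "x $ j = (\<Sum>i\<in>{()}. 1 * vec_monomial (\<lambda>i. if i = j then 1 else 0) x)"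
    by (simp add: prod.delta)
qed simp

lemma poly_fun_add:
  assumes "poly_fun F" "poly_fun G"
  shows "poly_fun (\<lambda>x. F x + G x)"
proof -
  obtain S c where S: "finite S" "\<And>x. F x = (\<Sum>\<alpha>\<in>S. c \<alpha> * vec_monomial \<alpha> x)"
    using poly_funE[OF assms(1)] by blast
  obtain T e where T: "finite T" "\<And>x. G x = (\<Sum>\<alpha>\<in>T. e \<alpha> * vec_monomial \<alpha> x)"
    using poly_funE[OF assms(2)] by blast
  show ?thesis
    by (rule poly_funI[where I="S <+> T" and a="case_sum c e" and \<alpha>="case_sum id id"])
      (use S T in \<open>simp_all add: sum.Plus comp_def\<close>)
qed

lemma poly_fun_mult:
  assumes "poly_fun F" "poly_fun G"
  shows "poly_fun (\<lambda>x. F x * G x)"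
proof -
  obtain S c where S: "finite S" "\<And>x. F x = (\<Sum>\<alpha>\<in>S. c \<alpha> * vec_monomial \<alpha> x)"
    using poly_funE[OF assms(1)] by blast
  obtain T e where T: "finite T" "\<And>x. G x = (\<Sum>\<alpha>\<in>T. e \<alpha> * vec_monomial \<alpha> x)"
    using poly_funE[OF assms(2)] by blast
  show ?thesis
    by (rule poly_funI[where I="S \<times> T" and a="\<lambda>(\<alpha>, \<beta>). c \<alpha> * e \<beta>" and \<alpha>="\<lambda>(\<alpha>, \<beta>) i. \<alpha> i + \<beta> i"])
      (use S T in \<open>simp_all add: sum_product sum.cartesian_product vec_monomial_add case_prod_beta
        algebra_simps\<close>)
qed

lemma poly_fun_power: "poly_fun F \<Longrightarrow> poly_fun (\<lambda>x. F x ^ n)"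
  by (induction n) (auto intro: poly_fun_const poly_fun_mult)

lemma poly_fun_sum:
  "finite A \<Longrightarrow> (\<And>k. k \<in> A \<Longrightarrow> poly_fun (F k)) \<Longrightarrow> poly_fun (\<lambda>x. \<Sum>k\<in>A. F k x)"
  by (induction A rule: finite_induct) (auto intro: poly_fun_const poly_fun_add)

lemma poly_fun_along_line:
  assumes "poly_fun H"
  obtains q where "\<And>t. H (x + t *\<^sub>R v) = poly q t"
proof -
  obtain S c where S: "\<And>x. H x = (\<Sum>\<alpha>\<in>S. c \<alpha> * vec_monomial \<alpha> x)"
    using poly_funE[OF assms] by blast
  have "H (x + t *\<^sub>R v) = poly (\<Sum>\<alpha>\<in>S. smult (c \<alpha>) (\<Prod>i\<in>UNIV. [:x $ i, v $ i:] ^ \<alpha> i)) t" for t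
    by (simp add: S poly_sum poly_prod vec_monomial_def poly_power)
  then show ?thesis by (rule that)
qed

lemma homogeneous_eq_norm_power_mult:
  fixes H :: "real^'n::finite \<Rightarrow> real"
  assumes "homogeneous_of_degree n H" "x \<noteq> 0"
  shows "H x = norm x ^ n * H (x /\<^sub>R norm x)"
proof -
  have "H (norm x *\<^sub>R (x /\<^sub>R norm x)) = norm x ^ n * H (x /\<^sub>R norm x)"
    using assms(1) unfolding homogeneous_of_degree_def by blast
  then show ?thesis using assms(2) by simp
qed

lemma homogeneous_eq_if_eq_on_sphere:
  fixes F G :: "real^'n::finite \<Rightarrow> real"
  assumes F: "homogeneous_of_degree n F" and G: "homogeneous_of_degree n G"
    and sphere: "\<And>\<sigma>. norm \<sigma> = 1 \<Longrightarrow> F \<sigma> = G \<sigma>"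
  shows "F = G"
proof
  fix x :: "real^'n"
  show "F x = G x"
  proof (cases "x = 0")
    case True
    define \<sigma> :: "real^'n" where "\<sigma> = axis (first_index TYPE('n)) 1"
    have "F (0 *\<^sub>R \<sigma>) = 0 ^ n * F \<sigma>" "G (0 *\<^sub>R \<sigma>) = 0 ^ n * G \<sigma>"
      using F G unfolding homogeneous_of_degree_def by blast+
    moreover have "F \<sigma> = G \<sigma>"
      by (rule sphere) (simp add: \<sigma>_def)
    ultimately show ?thesis using True by simp
  next
    case False
    have "F (x /\<^sub>R norm x) = G (x /\<^sub>R norm x)"
      by (rule sphere) (use False in simp)
    then show ?thesis
      unfolding homogeneous_eq_norm_power_mult[OF F False] homogeneous_eq_norm_power_mult[OF G False]
      by simp
  qed
qed

section \<open>Real polynomials\<close>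

lemma poly_eq_if_eq_on_Ioo:
  fixes p q :: "real poly"
  assumes "a < b" "\<And>w. a < w \<Longrightarrow> w < b \<Longrightarrow> poly p w = poly q w"
  shows "p = q"
proof -
  have "{a<..<b} \<subseteq> {w. poly (p - q) w = 0}"
    using assms(2) by auto
  then have "infinite {w. poly (p - q) w = 0}"
    by (rule infinite_super) (simp add: infinite_Ioo assms(1))
  then have "p - q = 0"
    by (metis poly_roots_finite)
  then show ?thesis by simp
qed

lemma degree_le_if_poly_bounded:
  fixes h :: "real poly"
  assumes bound: "\<And>u. \<bar>poly h u\<bar> \<le> M * (1 + u^2)^l"
  shows "degree h \<le> 2*l"
proof (rule ccontr)
  assume "\<not> degree h \<le> 2*l"
  define q :: "real poly" where "q = [:1,0,1:]^l"
  have poly_q: "poly q u = (1 + u^2)^l" for u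
    by (simp add: q_def poly_power power2_eq_square)
  have "degree q < degree h"
    using \<open>\<not> degree h \<le> 2*l\<close> by (simp add: q_def degree_power_eq)
  then have "((\<lambda>u. poly q u / poly h u) \<longlongrightarrow> 0) at_infinity"
    by (rule poly_divide_tendsto_0_at_infinity)
  then have "\<forall>\<^sub>F u in at_infinity. \<bar>poly q u / poly h u\<bar> < 1 / (\<bar>M\<bar> + 1)"
    by (auto dest!: tendstoD[where e="1 / (\<bar>M\<bar> + 1)"])
  moreover have "\<forall>\<^sub>F u in at_infinity. poly h u \<noteq> 0"
    using \<open>degree q < degree h\<close> by (intro poly_eventually_not_zero) auto
  ultimately obtain u where u: "\<bar>poly q u / poly h u\<bar> < 1 / (\<bar>M\<bar> + 1)" "poly h u \<noteq> 0"
    using eventually_happens'[OF trivial_limit_at_infinity] eventually_conj by blast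
  have "poly q u > 0"
    unfolding poly_q by (simp add: add_pos_nonneg)
  then have "(\<bar>M\<bar> + 1) * poly q u < \<bar>poly h u\<bar>"
    using u by (simp add: abs_div_pos field_simps)
  moreover have "\<bar>poly h u\<bar> \<le> \<bar>M\<bar> * poly q u"
    using bound[of u] \<open>poly q u > 0\<close> unfolding poly_q
    by (meson abs_ge_self mult_right_mono order_trans less_imp_le)
  ultimately show False
    using \<open>poly q u > 0\<close> by (simp add: algebra_simps)
qed

lemma sum_even_indices:
  fixes f :: "nat \<Rightarrow> 'a::comm_monoid_add"
  shows "(\<Sum>i\<le>2*l. if even i then f i else 0) = (\<Sum>k\<le>l. f (2*k))"
proof -
  have "(\<Sum>i\<le>2*l. if even i then f i else 0) = sum f {i\<in>{..2*l}. even i}"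
    by (rule sum.inter_filter[symmetric]) simp
  also have "{i\<in>{..2*l}. even i} = (\<lambda>k. 2*k) ` {..l}"
    by (auto elim!: evenE)
  also have "sum f ((\<lambda>k. 2*k) ` {..l}) = (\<Sum>k\<le>l. f (2*k))"
    by (subst sum.reindex) (auto simp: inj_on_def)
  finally show ?thesis .
qed

lemma even_poly_eq_sum_even_coeffs:
  fixes h :: "real poly"
  assumes "degree h \<le> 2*l" "\<And>u. poly h (-u) = poly h u"
  shows "poly h u = (\<Sum>k\<le>l. coeff h (2*k) * (u^2)^k)"
proof -
  have expand: "poly h v = (\<Sum>i\<le>2*l. coeff h i * v^i)" for v
  proof -
    have "poly h v = poly (\<Sum>i\<le>2*l. monom (coeff h i) i) v"
      using poly_as_sum_of_monoms'[OF assms(1)] by simp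
    then show ?thesis by (simp add: poly_sum poly_monom)
  qed
  have "2 * poly h u = poly h u + poly h (-u)"
    using assms(2) by simp
  also have "\<dots> = (\<Sum>i\<le>2*l. if even i then 2 * (coeff h i * u^i) else 0)"
    unfolding expand sum.distrib[symmetric] by (intro sum.cong refl) auto
  also have "\<dots> = (\<Sum>k\<le>l. 2 * (coeff h (2*k) * u^(2*k)))"
    by (rule sum_even_indices)
  finally show ?thesis
    by (simp add: sum_distrib_left[symmetric] power_mult)
qed

lemma even_sum_eq_0_imp_coeffs_eq_0:
  fixes c :: "nat \<Rightarrow> real"
  assumes "\<And>u. (\<Sum>k\<le>n. c k * (u^2)^k) = 0" "k \<le> n"
  shows "c k = 0"
proof -
  define Q where "Q = (\<Sum>k\<le>n. monom (c k) (2*k))"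
  have "poly Q u = 0" for u
    using assms(1)[of u] by (simp add: Q_def poly_sum poly_monom power_mult)
  then have "Q = 0"
    using poly_all_0_iff_0 by blast
  moreover have "coeff Q (2*k) = c k"
    using assms(2) by (simp add: Q_def coeff_sum)
  ultimately show ?thesis by simp
qed

definition bernstein_sum :: "(nat \<Rightarrow> real) \<Rightarrow> nat \<Rightarrow> real poly" where
  "bernstein_sum e l = (\<Sum>k\<le>l. smult (e k) ([:0,1:]^k * [:1,-1:]^(l-k)))"

lemma poly_bernstein_sum: "poly (bernstein_sum e l) y = (\<Sum>k\<le>l. e k * y^k * (1-y)^(l-k))"
  by (simp add: bernstein_sum_def poly_sum poly_power mult.assoc)

lemma bernstein_sum_at_1: "poly (bernstein_sum e l) 1 = e l"
proof -
  have "poly (bernstein_sum e l) 1 = (\<Sum>k\<le>l. if k = l then e k else 0)"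
    unfolding poly_bernstein_sum by (intro sum.cong refl) auto
  then show ?thesis by simp
qed

lemma bernstein_sum_at_0: "poly (bernstein_sum e l) 0 = e 0"
proof -
  have "poly (bernstein_sum e l) 0 = (\<Sum>k\<le>l. if k = 0 then e k else 0)"
    unfolding poly_bernstein_sum by (intro sum.cong refl) auto
  then show ?thesis by simp
qed

lemma bernstein_sum_cong: "(\<And>k. k \<le> l \<Longrightarrow> e k = e' k) \<Longrightarrow> bernstein_sum e l = bernstein_sum e' l"
  unfolding bernstein_sum_def by (intro sum.cong) auto

section \<open>Zonal polynomials and their Laplacian\<close>

abbreviation coord1 :: "real^'n::finite \<Rightarrow> real" where
  "coord1 x \<equiv> x $ first_index TYPE('n)"

definition perp_sqnorm :: "real^'n::finite \<Rightarrow> real" where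
  "perp_sqnorm x = (\<Sum>i\<in>UNIV - {first_index TYPE('n)}. (x $ i)^2)"

lemma norm_pow2_eq_coord1_perp_sqnorm: "(norm x)^2 = (coord1 x)^2 + perp_sqnorm x"
proof -
  have "(norm x)^2 = (\<Sum>i\<in>UNIV. (x $ i)^2)"
    unfolding power2_norm_eq_inner inner_vec_def by (simp add: power2_eq_square)
  also have "\<dots> = (coord1 x)^2 + perp_sqnorm x"
    unfolding perp_sqnorm_def by (rule sum.remove) auto
  finally show ?thesis .
qed

lemma perp_sqnorm_scaleR: "perp_sqnorm (t *\<^sub>R x) = t^2 * perp_sqnorm x"
  by (simp add: perp_sqnorm_def sum_distrib_left power_mult_distrib)

lemma perp_sqnorm_add_axis:
  fixes x :: "real^'n::finite"
  shows "perp_sqnorm (x + t *\<^sub>R axis i 1) =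
    perp_sqnorm x + (if i = first_index TYPE('n) then 0 else 2 * t * x $ i + t^2)"
proof -
  let ?U = "UNIV - {first_index TYPE('n)}"
  have "perp_sqnorm (x + t *\<^sub>R axis i 1) =
      (\<Sum>j\<in>?U. (x $ j)^2 + (if j = i then 2 * t * x $ i + t^2 else 0))"
    unfolding perp_sqnorm_def by (intro sum.cong refl) (auto simp: axis_def power2_eq_square algebra_simps)
  then show ?thesis
    by (simp add: sum.distrib perp_sqnorm_def)
qed

lemma poly_fun_perp_sqnorm: "poly_fun (perp_sqnorm :: real^'n::finite \<Rightarrow> real)"
  unfolding perp_sqnorm_def[abs_def] by (intro poly_fun_sum poly_fun_power poly_fun_coord) auto

lemma exists_perp_axis:
  assumes "CARD('n::finite) \<ge> 2"
  shows "\<exists>j::'n. j \<noteq> first_index TYPE('n)"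
proof (rule ccontr)
  assume "\<not> ?thesis"
  then have "(UNIV :: 'n set) = {first_index TYPE('n)}" by auto
  then have "CARD('n) = card {first_index TYPE('n)}" by (rule arg_cong)
  then show False using assms by simp
qed

lemma axis_plane_coords:
  fixes j :: "'n::finite"
  assumes "j \<noteq> first_index TYPE('n)"
  shows "coord1 (a *\<^sub>R axis j 1 + u *\<^sub>R axis (first_index TYPE('n)) 1 :: real^'n) = u"
    and "perp_sqnorm (a *\<^sub>R axis j 1 + u *\<^sub>R axis (first_index TYPE('n)) 1 :: real^'n) = a^2"
proof -
  show "coord1 (a *\<^sub>R axis j 1 + u *\<^sub>R axis (first_index TYPE('n)) 1 :: real^'n) = u"
    using assms by (simp add: axis_def)
  have "perp_sqnorm (a *\<^sub>R axis j 1 + u *\<^sub>R axis (first_index TYPE('n)) 1 :: real^'n) =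
      (\<Sum>i\<in>UNIV - {first_index TYPE('n)}. if i = j then a^2 else 0)"
    unfolding perp_sqnorm_def by (intro sum.cong refl) (auto simp: axis_def)
  also have "\<dots> = a^2"
    using assms by simp
  finally show "perp_sqnorm (a *\<^sub>R axis j 1 + u *\<^sub>R axis (first_index TYPE('n)) 1 :: real^'n) = a^2" .
qed

definition zonal :: "(nat \<Rightarrow> real) \<Rightarrow> nat \<Rightarrow> real^'n::finite \<Rightarrow> real" where
  "zonal e l x = (\<Sum>k\<le>l. e k * ((coord1 x)^2)^k * perp_sqnorm x ^ (l-k))"

lemma poly_fun_zonal: "poly_fun (zonal e l :: real^'n::finite \<Rightarrow> real)"
  unfolding zonal_def[abs_def]
  by (intro poly_fun_sum poly_fun_mult poly_fun_power poly_fun_coord poly_fun_const poly_fun_perp_sqnorm) auto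

lemma homogeneous_zonal: "homogeneous_of_degree (2*l) (zonal e l)"
  unfolding homogeneous_of_degree_def
proof (intro allI)
  fix t and x :: "real^'n"
  have "zonal e l (t *\<^sub>R x) = (\<Sum>k\<le>l. (t^2)^k * (t^2)^(l-k) * (e k * ((coord1 x)^2)^k * perp_sqnorm x ^ (l-k)))"
    unfolding zonal_def perp_sqnorm_scaleR by (intro sum.cong refl) (simp add: power_mult_distrib algebra_simps)
  also have "\<dots> = t^(2*l) * zonal e l x"
    by (simp add: zonal_def sum_distrib_left power_add[symmetric] power_mult)
  finally show "zonal e l (t *\<^sub>R x) = t^(2*l) * zonal e l x" .
qed

definition zonal_profile :: "(nat \<Rightarrow> real) \<Rightarrow> nat \<Rightarrow> real poly" where
  "zonal_profile e l = bernstein_sum e l \<circ>\<^sub>p [:0,0,1:]"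

lemma poly_zonal_profile: "poly (zonal_profile e l) x = poly (bernstein_sum e l) (x^2)"
  by (simp add: zonal_profile_def poly_pcompose power2_eq_square)

lemma zonal_eq_norm_power_mult_profile:
  fixes x :: "real^'n::finite"
  assumes "x \<noteq> 0"
  shows "zonal e l x = norm x ^ (2*l) * poly (zonal_profile e l) (coord1 x / norm x)"
proof -
  define S where "S = (norm x)^2"
  have "S > 0" unfolding S_def using assms by simp
  have "1 - (coord1 x)^2 / S = perp_sqnorm x / S"
    using \<open>S > 0\<close> unfolding S_def norm_pow2_eq_coord1_perp_sqnorm by (simp add: field_simps)
  then have "norm x ^ (2*l) * poly (zonal_profile e l) (coord1 x / norm x) =
      (\<Sum>k\<le>l. S^k * S^(l-k) * (e k * ((coord1 x)^2 / S)^k * (perp_sqnorm x / S)^(l-k)))"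
    unfolding poly_zonal_profile poly_bernstein_sum sum_distrib_left
    by (intro sum.cong refl) (simp add: S_def power_divide power_mult flip: power_add)
  also have "\<dots> = zonal e l x"
    unfolding zonal_def using \<open>S > 0\<close> by (intro sum.cong refl) (simp add: power_divide)
  finally show ?thesis ..
qed

lemma zonal_on_sphere:
  fixes \<sigma> :: "real^'n::finite"
  assumes "norm \<sigma> = 1"
  shows "zonal e l \<sigma> = poly (zonal_profile e l) (coord1 \<sigma>)"
proof -
  have "\<sigma> \<noteq> 0" using assms by auto
  then show ?thesis using zonal_eq_norm_power_mult_profile[of \<sigma> e l] assms by simp
qed

definition zonal_lap :: "real \<Rightarrow> (nat \<Rightarrow> real) \<Rightarrow> nat \<Rightarrow> real \<Rightarrow> real \<Rightarrow> real" where
  "zonal_lap d e l s r =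
     (\<Sum>k\<le>l. e k * (2 * real k * (2 * real k - 1)) * s^(k-1) * r^(l-k)) +
     (\<Sum>k\<le>l. e k * (2 * real (l-k) * (2 * real (l-k) + d - 3)) * s^k * r^(l-k-1))"

lemma deriv_deriv_eqI:
  fixes g :: "real \<Rightarrow> real"
  assumes "\<And>s. (g has_real_derivative g' s) (at s)" "\<And>s. (g' has_real_derivative g'' s) (at s)"
  shows "deriv (deriv g) x = g'' x"
proof -
  have "deriv g = g'" using assms(1) DERIV_imp_deriv by blast
  then show ?thesis using DERIV_imp_deriv[OF assms(2)] by simp
qed

lemma deriv2_zonal_along_e1:
  fixes x :: "real^'n::finite"
  shows "deriv (deriv (\<lambda>t. zonal e l (x + t *\<^sub>R axis (first_index TYPE('n)) 1))) 0 =
    (\<Sum>k\<le>l. e k * (2 * real k * (2 * real k - 1)) * ((coord1 x)^2)^(k-1) * perp_sqnorm x ^ (l-k))"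
proof -
  let ?c = "coord1 x" and ?r = "perp_sqnorm x"
  have line: "zonal e l (x + t *\<^sub>R axis (first_index TYPE('n)) 1) = (\<Sum>k\<le>l. e k * (?c + t)^(2*k) * ?r^(l-k))" for t
    unfolding zonal_def perp_sqnorm_add_axis by (simp add: axis_def power_mult)
  have "deriv (deriv (\<lambda>t. zonal e l (x + t *\<^sub>R axis (first_index TYPE('n)) 1))) 0 =
      (\<Sum>k\<le>l. e k * (real (2*k) * (real (2*k-1) * (?c + 0)^(2*k-1-1))) * ?r^(l-k))"
    unfolding line by (rule deriv_deriv_eqI) (auto intro!: derivative_eq_intros sum.cong simp: mult_ac)
  also have "\<dots> = (\<Sum>k\<le>l. e k * (2 * real k * (2 * real k - 1)) * (?c^2)^(k-1) * ?r^(l-k))"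
  proof (intro sum.cong refl)
    fix k
    have "real (2*k) * (real (2*k-1) * ?c^(2*k-1-1)) = 2 * real k * (2 * real k - 1) * (?c^2)^(k-1)"
      by (cases k) (simp_all add: algebra_simps flip: power_mult)
    then show "e k * (real (2*k) * (real (2*k-1) * (?c + 0)^(2*k-1-1))) * ?r^(l-k) =
        e k * (2 * real k * (2 * real k - 1)) * (?c^2)^(k-1) * ?r^(l-k)"
      by simp
  qed
  finally show ?thesis .
qed

lemma deriv2_zonal_along_perp_axis:
  fixes x :: "real^'n::finite"
  assumes "i \<noteq> first_index TYPE('n)"
  shows "deriv (deriv (\<lambda>t. zonal e l (x + t *\<^sub>R axis i 1))) 0 =
    (\<Sum>k\<le>l. e k * ((coord1 x)^2)^k * (real (l-k) *
       (real (l-k-1) * perp_sqnorm x ^ (l-k-1-1) * (2 * x $ i)^2 + perp_sqnorm x ^ (l-k-1) * 2)))"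
proof -
  let ?s = "(coord1 x)^2" and ?r = "perp_sqnorm x"
  have line: "zonal e l (x + t *\<^sub>R axis i 1) = (\<Sum>k\<le>l. e k * ?s^k * (?r + 2 * t * x $ i + t^2)^(l-k))" for t
    unfolding zonal_def perp_sqnorm_add_axis using assms by (simp add: axis_def add.assoc)
  let ?q = "\<lambda>t. ?r + 2 * t * x $ i + t^2"
  have "deriv (deriv (\<lambda>t. zonal e l (x + t *\<^sub>R axis i 1))) 0 =
      (\<Sum>k\<le>l. e k * ?s^k * (real (l-k) * (real (l-k-1) * ?q 0^(l-k-1-1) * (2 * x $ i + 2 * 0)) *
        (2 * x $ i + 2 * 0) + real (l-k) * ?q 0^(l-k-1) * 2))"
    unfolding line
    by (rule deriv_deriv_eqI[where g'="\<lambda>t. \<Sum>k\<le>l. e k * ?s^k * (real (l-k) * ?q t^(l-k-1) * (2 * x $ i + 2 * t))"])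
      (auto intro!: derivative_eq_intros sum.cong simp: algebra_simps)
  then show ?thesis
    by (simp add: algebra_simps power2_eq_square)
qed

lemma card_perp_axes: "real (card (UNIV - {first_index TYPE('n::finite)})) = real CARD('n) - 1"
  by (simp add: card_Diff_singleton of_nat_diff Suc_leI)

lemma laplacian_zonal_perp_term:
  fixes r d :: real
  shows "real m * (real (m-1) * r^(m-1-1) * r * 4 + r^(m-1) * 2 * (d-1)) =
    2 * real m * (2 * real m + d - 3) * r^(m-1)"
  by (cases m rule: nat.exhaust[case_product nat.exhaust[of "m - 1"]])
    (auto simp: algebra_simps)

lemma laplacian_zonal:
  fixes x :: "real^'n::finite"
  shows "laplacian (zonal e l) x = zonal_lap (real CARD('n)) e l ((coord1 x)^2) (perp_sqnorm x)"
proof -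
  let ?U = "UNIV - {first_index TYPE('n)}"
  let ?D = "\<lambda>i. deriv (deriv (\<lambda>t. zonal e l (x + t *\<^sub>R axis i 1))) 0"
  let ?s = "(coord1 x)^2" and ?r = "perp_sqnorm x" and ?d = "real CARD('n)"
  have "sum ?D ?U = (\<Sum>i\<in>?U. \<Sum>k\<le>l. e k * ?s^k *
      (real (l-k) * (real (l-k-1) * ?r^(l-k-1-1) * (2 * x $ i)^2 + ?r^(l-k-1) * 2)))"
    by (intro sum.cong refl deriv2_zonal_along_perp_axis) auto
  also have "\<dots> = (\<Sum>k\<le>l. \<Sum>i\<in>?U. e k * ?s^k *
      (real (l-k) * (real (l-k-1) * ?r^(l-k-1-1) * (2 * x $ i)^2 + ?r^(l-k-1) * 2)))"
    by (rule sum.swap)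
  also have "\<dots> = (\<Sum>k\<le>l. e k * (2 * real (l-k) * (2 * real (l-k) + ?d - 3)) * ?s^k * ?r^(l-k-1))"
  proof (intro sum.cong refl)
    fix k
    let ?m = "l - k"
    have "(\<Sum>i\<in>?U. e k * ?s^k * (real ?m * (real (?m-1) * ?r^(?m-1-1) * (2 * x $ i)^2 + ?r^(?m-1) * 2)))
      = e k * ?s^k * (real ?m * (real (?m-1) * ?r^(?m-1-1) * 4 * (\<Sum>i\<in>?U. (x $ i)^2) +
          ?r^(?m-1) * 2 * real (card ?U)))"
      by (simp add: sum_distrib_left sum.distrib algebra_simps power_mult_distrib)
    also have "\<dots> = e k * ?s^k * (real ?m * (real (?m-1) * ?r^(?m-1-1) * ?r * 4 + ?r^(?m-1) * 2 * (?d - 1)))"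
      unfolding card_perp_axes perp_sqnorm_def by (simp add: algebra_simps)
    also have "\<dots> = e k * (2 * real ?m * (2 * real ?m + ?d - 3)) * ?s^k * ?r^(?m-1)"
      unfolding laplacian_zonal_perp_term by simp
    finally show "(\<Sum>i\<in>?U. e k * ?s^k * (real ?m * (real (?m-1) * ?r^(?m-1-1) * (2 * x $ i)^2 + ?r^(?m-1) * 2)))
      = e k * (2 * real ?m * (2 * real ?m + ?d - 3)) * ?s^k * ?r^(?m-1)" .
  qed
  finally have "sum ?D ?U = \<dots>" .
  moreover have "laplacian (zonal e l) x = ?D (first_index TYPE('n)) + sum ?D ?U"
    unfolding laplacian_def by (rule sum.remove) auto
  ultimately show ?thesis
    unfolding zonal_lap_def deriv2_zonal_along_e1 by simp
qed

section \<open>The coefficient recurrence\<close>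

definition lap_coeff :: "real \<Rightarrow> (nat \<Rightarrow> real) \<Rightarrow> nat \<Rightarrow> nat \<Rightarrow> real" where
  "lap_coeff d e l k =
     e (Suc k) * (2 * real (Suc k) * (2 * real k + 1)) + e k * (2 * real (l-k) * (2 * real (l-k) + d - 3))"

lemma zonal_lap_Suc:
  "zonal_lap d e (Suc l) s r = (\<Sum>k\<le>l. lap_coeff d e (Suc l) k * s^k * r^(l-k))"
proof -
  have first: "(\<Sum>k\<le>Suc l. e k * (2 * real k * (2 * real k - 1)) * s^(k-1) * r^(Suc l-k)) =
      (\<Sum>k\<le>l. e (Suc k) * (2 * real (Suc k) * (2 * real k + 1)) * s^k * r^(l-k))"
    by (subst sum.atMost_Suc_shift) (simp add: algebra_simps)
  have second: "(\<Sum>k\<le>Suc l. e k * (2 * real (Suc l-k) * (2 * real (Suc l-k) + d - 3)) * s^k * r^(Suc l-k-1)) =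
      (\<Sum>k\<le>l. e k * (2 * real (Suc l-k) * (2 * real (Suc l-k) + d - 3)) * s^k * r^(l-k))"
    unfolding sum.atMost_Suc[of _ l] by simp
  show ?thesis
    unfolding zonal_lap_def first second lap_coeff_def sum.distrib[symmetric]
    by (intro sum.cong refl) (simp add: algebra_simps)
qed

definition legendre_coeff :: "real \<Rightarrow> nat \<Rightarrow> nat \<Rightarrow> real" where
  "legendre_coeff d l k =
     (\<Prod>j\<in>{k..<l}. - (real (Suc j) * (2 * real j + 1)) / (real (l-j) * (2 * real (l-j) + d - 3)))"

lemma legendre_coeff_top [simp]: "legendre_coeff d l l = 1"
  by (simp add: legendre_coeff_def)

lemma legendre_coeff_step:
  "k < l \<Longrightarrow> legendre_coeff d l k =
     - (real (Suc k) * (2 * real k + 1)) / (real (l-k) * (2 * real (l-k) + d - 3)) * legendre_coeff d l (Suc k)"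
  unfolding legendre_coeff_def by (simp add: prod.atLeast_Suc_lessThan)

lemma lap_coeff_eq_0_iff:
  assumes "d \<ge> 2" "k < l"
  shows "lap_coeff d e l k = 0 \<longleftrightarrow>
    e k = - (real (Suc k) * (2 * real k + 1)) / (real (l-k) * (2 * real (l-k) + d - 3)) * e (Suc k)"
proof -
  define m where "m = l - k"
  have "real m * (2 * real m + d - 3) > 0"
    using assms unfolding m_def by (intro mult_pos_pos) auto
  then show ?thesis
    unfolding lap_coeff_def m_def[symmetric] by (auto simp: field_simps)
qed

lemma lap_coeff_legendre_coeff: "d \<ge> 2 \<Longrightarrow> k < l \<Longrightarrow> lap_coeff d (legendre_coeff d l) l k = 0"
  by (simp add: lap_coeff_eq_0_iff legendre_coeff_step)

lemma lap_coeff_eq_0_imp_legendre_coeff: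
  assumes "d \<ge> 2" "\<And>k. k < l \<Longrightarrow> lap_coeff d e l k = 0" "e l = 1" "k \<le> l"
  shows "e k = legendre_coeff d l k"
  using assms(4)
proof (induction rule: inc_induct)
  case base
  then show ?case using assms(3) by simp
next
  case (step k)
  then show ?case
    using assms(2)[OF step.hyps(2)] legendre_coeff_step[OF step.hyps(2)]
    by (simp add: lap_coeff_eq_0_iff[OF assms(1) step.hyps(2)])
qed

lemma zonal_lap_legendre_coeff: "d \<ge> 2 \<Longrightarrow> zonal_lap d (legendre_coeff d l) l s r = 0"
  by (cases l) (simp add: zonal_lap_def, simp add: zonal_lap_Suc lap_coeff_legendre_coeff)

lemma abs_legendre_coeff_0:
  assumes "d \<ge> 2"
  shows "\<bar>legendre_coeff d l 0\<bar> = (\<Prod>j<l. (2 * real j + 1) / (2 * real j + d - 1))"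
proof -
  have "\<bar>legendre_coeff d l 0\<bar> =
      (\<Prod>j<l. real (Suc j) * (2 * real j + 1)) / (\<Prod>j<l. real (l-j) * (2 * real (l-j) + d - 3))"
    unfolding legendre_coeff_def atLeast0LessThan abs_prod prod_dividef[symmetric]
    using assms by (intro prod.cong refl) (simp add: abs_div_pos of_nat_diff)
  also have "(\<Prod>j<l. real (l-j) * (2 * real (l-j) + d - 3)) = (\<Prod>j<l. real (Suc j) * (2 * real j + d - 1))"
    by (subst prod.nat_diff_reindex[symmetric]) (intro prod.cong refl, simp add: of_nat_diff algebra_simps)
  also have "(\<Prod>j<l. real (Suc j) * (2 * real j + 1)) / \<dots> = (\<Prod>j<l. (2 * real j + 1) / (2 * real j + d - 1))"
    unfolding prod_dividef[symmetric] by (intro prod.cong refl) simp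
  finally show ?thesis .
qed

lemma abs_legendre_coeff_0_le:
  assumes "d \<ge> 2" "l \<ge> 1"
  shows "\<bar>legendre_coeff d l 0\<bar> \<le> 1 / (d - 1)"
proof -
  obtain l' where l: "l = Suc l'" using assms(2) by (cases l) auto
  have "\<bar>legendre_coeff d l 0\<bar> = 1 / (d - 1) * (\<Prod>j<l'. (2 * real (Suc j) + 1) / (2 * real (Suc j) + d - 1))"
    unfolding abs_legendre_coeff_0[OF assms(1)] l prod.lessThan_Suc_shift by simp
  also have "\<dots> \<le> 1 / (d - 1) * 1"
    using assms(1) by (intro mult_left_mono prod_le_1) auto
  finally show ?thesis by simp
qed

section \<open>The even Legendre polynomials\<close>

lemma harmonic_zonal_legendre_coeff:
  assumes "CARD('n::finite) \<ge> 2"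
  shows "harmonic (zonal (legendre_coeff (real CARD('n)) l) l :: real^'n \<Rightarrow> real)"
  using assms unfolding harmonic_def laplacian_zonal by (simp add: zonal_lap_legendre_coeff)

lemma profile_eq_zonal_profile:
  fixes p :: "real poly"
  assumes "\<And>u. (1 + u^2)^l * poly p (u / sqrt (1 + u^2)) = (\<Sum>k\<le>l. e k * (u^2)^k)"
  shows "p = zonal_profile e l"
proof -
  have "poly p w = poly (zonal_profile e l) w" if "-1 < w" "w < 1" for w
  proof -
    define c where "c = 1 - w^2"
    have "c > 0" using that unfolding c_def by (simp add: abs_square_less_1)
    define u where "u = w / sqrt c"
    have u2: "u^2 = w^2 / c" unfolding u_def using \<open>c > 0\<close> by (simp add: power_divide)
    have "1 + u^2 = 1 / c" unfolding u2 c_def using \<open>c > 0\<close> c_def by (simp add: field_simps)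
    moreover have "u / sqrt (1 + u^2) = w"
    proof -
      have "sqrt (1 + u^2) = 1 / sqrt c" using \<open>1 + u^2 = 1 / c\<close> by (simp add: real_sqrt_divide)
      then show ?thesis unfolding u_def using \<open>c > 0\<close> by simp
    qed
    ultimately have "(1 / c)^l * poly p w = (\<Sum>k\<le>l. e k * (w^2 / c)^k)"
      using assms[of u] unfolding u2 by simp
    then have "poly p w = c^l * (\<Sum>k\<le>l. e k * (w^2 / c)^k)"
      using \<open>c > 0\<close> by (simp add: power_one_over field_simps)
    also have "\<dots> = (\<Sum>k\<le>l. e k * (w^2)^k * c^(l-k))"
      unfolding sum_distrib_left
    proof (intro sum.cong refl)
      fix k assume "k \<in> {..l}"
      then have "c^l = c^k * c^(l-k)" by (simp flip: power_add)
      then show "c^l * (e k * (w^2 / c)^k) = e k * (w^2)^k * c^(l-k)"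
        using \<open>c > 0\<close> by (simp add: power_divide)
    qed
    also have "\<dots> = poly (zonal_profile e l) w"
      by (simp add: poly_zonal_profile poly_bernstein_sum c_def)
    finally show ?thesis .
  qed
  then show ?thesis
    by (intro poly_eq_if_eq_on_Ioo[of "-1" 1]) auto
qed

lemma profile_eq_zonal_profile_if_even:
  fixes h p :: "real poly"
  assumes h: "\<And>u. poly h u = (1 + u^2)^l * poly p (u / sqrt (1 + u^2))"
    and even: "\<And>u. poly h (-u) = poly h u"
  shows "p = zonal_profile (\<lambda>k. coeff h (2*k)) l"
proof -
  have "bounded (poly p ` {-1..1})"
    by (intro compact_imp_bounded compact_continuous_image continuous_intros) auto
  then obtain M where M: "\<forall>w\<in>{-1..1}. \<bar>poly p w\<bar> \<le> M"
    unfolding bounded_iff by auto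
  have "\<bar>poly h u\<bar> \<le> M * (1 + u^2)^l" for u
  proof -
    have "\<bar>u\<bar> \<le> sqrt (1 + u^2)"
      using real_sqrt_le_mono[of "u^2" "1 + u^2"] by simp
    then have "\<bar>poly p (u / sqrt (1 + u^2))\<bar> \<le> M"
      by (intro M[rule_format]) (auto simp: abs_le_iff divide_le_eq le_divide_eq add_pos_nonneg)
    then have "(1 + u^2)^l * \<bar>poly p (u / sqrt (1 + u^2))\<bar> \<le> (1 + u^2)^l * M"
      by (intro mult_left_mono) simp_all
    then show ?thesis
      unfolding h abs_mult by (simp add: mult.commute)
  qed
  then have "poly h u = (\<Sum>k\<le>l. coeff h (2*k) * (u^2)^k)" for u
    by (intro even_poly_eq_sum_even_coeffs degree_le_if_poly_bounded even)
  then show ?thesis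
    by (intro profile_eq_zonal_profile) (simp add: h)
qed

lemma homogeneous_profile_on_axis_plane:
  fixes H :: "real^'n::finite \<Rightarrow> real"
  assumes hom: "homogeneous_of_degree (2*l) H"
    and sphere: "\<And>\<sigma>. norm \<sigma> = 1 \<Longrightarrow> H \<sigma> = poly p (coord1 \<sigma>)"
    and "j \<noteq> first_index TYPE('n)" "a^2 = 1"
  shows "H (a *\<^sub>R axis j 1 + u *\<^sub>R axis (first_index TYPE('n)) 1) = (1 + u^2)^l * poly p (u / sqrt (1 + u^2))"
proof -
  define y :: "real^'n" where "y = a *\<^sub>R axis j 1 + u *\<^sub>R axis (first_index TYPE('n)) 1"
  have coord1_y: "coord1 y = u"
    unfolding y_def by (rule axis_plane_coords(1)[OF assms(3)])
  have perp_y: "perp_sqnorm y = a^2"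
    unfolding y_def by (rule axis_plane_coords(2)[OF assms(3)])
  have norm_y2: "(norm y)^2 = 1 + u^2"
    using assms(4) by (simp add: norm_pow2_eq_coord1_perp_sqnorm coord1_y perp_y)
  then have norm_y: "norm y = sqrt (1 + u^2)"
    by (metis norm_ge_zero real_sqrt_unique)
  moreover have "1 + u^2 > 0"
    by (simp add: add_pos_nonneg)
  ultimately have "y \<noteq> 0"
    by auto
  have "H y = norm y ^ (2*l) * poly p (coord1 (y /\<^sub>R norm y))"
    using homogeneous_eq_norm_power_mult[OF hom \<open>y \<noteq> 0\<close>] sphere[of "y /\<^sub>R norm y"] \<open>y \<noteq> 0\<close> by simp
  also have "norm y ^ (2*l) = (1 + u^2)^l"
    using norm_y2 by (simp add: power_mult)
  also have "coord1 (y /\<^sub>R norm y) = u / sqrt (1 + u^2)"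
    using coord1_y norm_y by (simp add: divide_inverse mult.commute)
  finally show ?thesis unfolding y_def .
qed

lemma zonal_if_homogeneous_with_profile:
  fixes H :: "real^'n::finite \<Rightarrow> real"
  assumes "CARD('n) \<ge> 2" "poly_fun H" and hom: "homogeneous_of_degree (2*l) H"
    and sphere: "\<And>\<sigma>. norm \<sigma> = 1 \<Longrightarrow> H \<sigma> = poly p (coord1 \<sigma>)"
  obtains e where "p = zonal_profile e l" "H = zonal e l"
proof -
  let ?i = "first_index TYPE('n)"
  obtain j :: 'n where j: "j \<noteq> ?i"
    using exists_perp_axis[OF assms(1)] by blast
  have plane: "H (a *\<^sub>R axis j 1 + u *\<^sub>R axis ?i 1) = (1 + u^2)^l * poly p (u / sqrt (1 + u^2))"
    if "a^2 = 1" for a u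
    by (rule homogeneous_profile_on_axis_plane[OF hom sphere j that])
  obtain h where h: "\<And>u. H (axis j 1 + u *\<^sub>R axis ?i 1) = poly h u"
    using poly_fun_along_line[OF assms(2)] by blast
  have h_eq: "poly h u = (1 + u^2)^l * poly p (u / sqrt (1 + u^2))" for u
    using plane[of 1 u] h[of u] by simp
  have h_even: "poly h (-u) = poly h u" for u
  proof -
    have "poly h (-u) = (-1) ^ (2*l) * H (axis j 1 + (-u) *\<^sub>R axis ?i 1)"
      using h[of "-u"] by simp
    also have "\<dots> = H ((-1) *\<^sub>R axis j 1 + u *\<^sub>R axis ?i 1)"
      using hom[unfolded homogeneous_of_degree_def, rule_format, of "-1" "axis j 1 + (-u) *\<^sub>R axis ?i 1"]
      by (simp add: algebra_simps)
    also have "\<dots> = poly h u"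
      using plane[of "-1" u] h_eq[of u] by simp
    finally show ?thesis .
  qed
  have "p = zonal_profile (\<lambda>k. coeff h (2*k)) l"
    by (rule profile_eq_zonal_profile_if_even[OF h_eq h_even])
  moreover have "H = zonal (\<lambda>k. coeff h (2*k)) l"
    using homogeneous_zonal
    by (intro homogeneous_eq_if_eq_on_sphere[OF hom]) (simp_all add: sphere zonal_on_sphere calculation)
  ultimately show ?thesis by (rule that)
qed

lemma harmonic_zonal_imp_legendre_coeff:
  assumes "CARD('n::finite) \<ge> 2" "harmonic (zonal e l :: real^'n \<Rightarrow> real)" "e l = 1" "k \<le> l"
  shows "e k = legendre_coeff (real CARD('n)) l k"
proof (cases l)
  case 0
  then show ?thesis using assms(3,4) by simp
next
  case (Suc l')
  let ?i = "first_index TYPE('n)"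
  obtain j :: 'n where j: "j \<noteq> ?i"
    using exists_perp_axis[OF assms(1)] by blast
  have "lap_coeff (real CARD('n)) e l k' = 0" if "k' < l" for k'
  proof (rule even_sum_eq_0_imp_coeffs_eq_0)
    fix u
    have "laplacian (zonal e l) (1 *\<^sub>R axis j 1 + u *\<^sub>R axis ?i 1 :: real^'n) = 0"
      using assms(2) unfolding harmonic_def by blast
    then show "(\<Sum>k\<le>l'. lap_coeff (real CARD('n)) e l k * (u^2)^k) = 0"
      unfolding laplacian_zonal axis_plane_coords[OF j] Suc zonal_lap_Suc by simp
  next
    show "k' \<le> l'" using that Suc by simp
  qed
  then show ?thesis
    using lap_coeff_eq_0_imp_legendre_coeff[of "real CARD('n)" l e k] assms by simp
qed

lemma legendre_poly_even:
  assumes "CARD('n::finite) \<ge> 2"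
  shows "legendre_poly TYPE('n) (2*l) = zonal_profile (legendre_coeff (real CARD('n)) l) l"
  unfolding legendre_poly_def
proof (rule the_equality)
  let ?e = "legendre_coeff (real CARD('n)) l"
  show "poly (zonal_profile ?e l) 1 = 1 \<and>
     (\<exists>H :: real^'n \<Rightarrow> real. poly_fun H \<and> homogeneous_of_degree (2*l) H \<and> harmonic H \<and>
        (\<forall>\<sigma>. norm \<sigma> = 1 \<longrightarrow> H \<sigma> = poly (zonal_profile ?e l) (coord1 \<sigma>)))"
  proof (intro conjI exI[of _ "zonal ?e l"] allI impI)
    show "poly (zonal_profile ?e l) 1 = 1"
      by (simp add: poly_zonal_profile bernstein_sum_at_1)
  qed (simp_all add: poly_fun_zonal homogeneous_zonal harmonic_zonal_legendre_coeff[OF assms] zonal_on_sphere)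
next
  fix p
  assume "poly p 1 = 1 \<and>
     (\<exists>H :: real^'n \<Rightarrow> real. poly_fun H \<and> homogeneous_of_degree (2*l) H \<and> harmonic H \<and>
        (\<forall>\<sigma>. norm \<sigma> = 1 \<longrightarrow> H \<sigma> = poly p (coord1 \<sigma>)))"
  then obtain H :: "real^'n \<Rightarrow> real" where "poly p 1 = 1" "poly_fun H" "homogeneous_of_degree (2*l) H"
    "harmonic H" "\<And>\<sigma>. norm \<sigma> = 1 \<Longrightarrow> H \<sigma> = poly p (coord1 \<sigma>)"
    by blast
  then obtain e where e: "p = zonal_profile e l" "H = zonal e l"
    using zonal_if_homogeneous_with_profile[OF assms] by metis
  have "e l = 1"
    using \<open>poly p 1 = 1\<close> by (simp add: e poly_zonal_profile bernstein_sum_at_1)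
  moreover have "harmonic (zonal e l :: real^'n \<Rightarrow> real)"
    using \<open>harmonic H\<close> by (simp add: e)
  ultimately have "bernstein_sum e l = bernstein_sum (legendre_coeff (real CARD('n)) l) l"
    using harmonic_zonal_imp_legendre_coeff[OF assms] by (intro bernstein_sum_cong) blast
  then show "p = zonal_profile (legendre_coeff (real CARD('n)) l) l"
    unfolding e zonal_profile_def by simp
qed

definition even_legendre_sq :: "real \<Rightarrow> nat \<Rightarrow> real poly" where
  "even_legendre_sq d l = bernstein_sum (legendre_coeff d l) l"

lemma legendre_even_eq:
  assumes "CARD('n::finite) \<ge> 2"
  shows "legendre TYPE('n) (2*l) x = poly (even_legendre_sq (real CARD('n)) l) (x^2)"
  unfolding legendre_def legendre_poly_even[OF assms] poly_zonal_profile even_legendre_sq_def ..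

lemma legendre_2:
  assumes "CARD('n::finite) \<ge> 2"
  shows "legendre TYPE('n) 2 x = 1 - real CARD('n) / (real CARD('n) - 1) * (1 - x^2)"
proof -
  have "legendre TYPE('n) 2 x = poly (even_legendre_sq (real CARD('n)) 1) (x^2)"
    using legendre_even_eq[OF assms, of 1 x] by simp
  moreover have "real CARD('n) - 1 \<noteq> 0"
    using assms by simp
  ultimately show ?thesis
    by (simp add: even_legendre_sq_def poly_bernstein_sum legendre_coeff_def field_simps)
qed

section \<open>The Legendre equation and the energy estimate\<close>

lemma legendre_operator_bernstein_term:
  fixes y d :: real and k m :: nat
  shows "2*y*(1-y) * (real k * (real (k-1) * y^(k-1-1)) * (1-y)^m
        - 2 * (real k * y^(k-1)) * (real m * (1-y)^(m-1)) + y^k * (real m * (real (m-1) * (1-y)^(m-1-1))))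
      + (1 - d*y) * (real k * y^(k-1) * (1-y)^m - y^k * (real m * (1-y)^(m-1)))
      + real (k+m) * (2 * real (k+m) + d - 2) * (y^k * (1-y)^m)
    = real k * (2 * real k - 1) * y^(k-1) * (1-y)^m + real m * (2 * real m + d - 3) * y^k * (1-y)^(m-1)"
proof -
  have "k = 0 \<or> k = 1 \<or> (\<exists>k'. k = Suc (Suc k'))" by presburger
  moreover have "m = 0 \<or> m = 1 \<or> (\<exists>m'. m = Suc (Suc m'))" by presburger
  ultimately show ?thesis
    by (elim disjE exE) (simp_all add: algebra_simps power_Suc)
qed

(* On the unit sphere, where x_1^2 = y and |x'|^2 = 1 - y, the Laplacian of a zonal polynomial is
   twice the Legendre operator applied to its profile in the variable y. *)
lemma legendre_operator_bernstein_sum: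
  fixes d y :: real and e :: "nat \<Rightarrow> real" and l :: nat
  defines "R \<equiv> bernstein_sum e l"
  shows "2*y*(1-y) * poly (pderiv (pderiv R)) y + (1 - d*y) * poly (pderiv R) y
      + real l * (2 * real l + d - 2) * poly R y = zonal_lap d e l y (1-y) / 2"
proof -
  define D1 where "D1 k z = real k * z^(k-1) * (1-z)^(l-k) - z^k * (real (l-k) * (1-z)^(l-k-1))" for k z
  define D2 where "D2 k z = real k * (real (k-1) * z^(k-1-1)) * (1-z)^(l-k)
      - 2 * (real k * z^(k-1)) * (real (l-k) * (1-z)^(l-k-1))
      + z^k * (real (l-k) * (real (l-k-1) * (1-z)^(l-k-1-1)))" for k z
  have R': "poly (pderiv R) z = (\<Sum>k\<le>l. e k * D1 k z)" for z
  proof (rule DERIV_unique[OF poly_DERIV])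
    show "(poly R has_real_derivative (\<Sum>k\<le>l. e k * D1 k z)) (at z)"
      unfolding R_def poly_bernstein_sum[abs_def] D1_def
      by (auto intro!: derivative_eq_intros sum.cong simp: algebra_simps)
  qed
  have R'': "poly (pderiv (pderiv R)) z = (\<Sum>k\<le>l. e k * D2 k z)" for z
  proof (rule DERIV_unique[OF poly_DERIV])
    show "(poly (pderiv R) has_real_derivative (\<Sum>k\<le>l. e k * D2 k z)) (at z)"
      unfolding R'[abs_def] D1_def D2_def
      by (auto intro!: derivative_eq_intros sum.cong simp: algebra_simps)
  qed
  have "2*y*(1-y) * poly (pderiv (pderiv R)) y + (1 - d*y) * poly (pderiv R) y
      + real l * (2 * real l + d - 2) * poly R y =
    (\<Sum>k\<le>l. e k * (2*y*(1-y) * D2 k y + (1 - d*y) * D1 k y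
      + real l * (2 * real l + d - 2) * (y^k * (1-y)^(l-k))))"
    unfolding R' R'' unfolding R_def poly_bernstein_sum sum_distrib_left sum.distrib[symmetric]
    by (intro sum.cong refl) (simp add: algebra_simps)
  also have "\<dots> = (\<Sum>k\<le>l. e k * (real k * (2 * real k - 1) * y^(k-1) * (1-y)^(l-k)
      + real (l-k) * (2 * real (l-k) + d - 3) * y^k * (1-y)^(l-k-1)))"
  proof (intro sum.cong refl)
    fix k assume "k \<in> {..l}"
    then have "k + (l-k) = l" by simp
    then show "e k * (2*y*(1-y) * D2 k y + (1 - d*y) * D1 k y + real l * (2 * real l + d - 2) * (y^k * (1-y)^(l-k)))
      = e k * (real k * (2 * real k - 1) * y^(k-1) * (1-y)^(l-k)
        + real (l-k) * (2 * real (l-k) + d - 3) * y^k * (1-y)^(l-k-1))"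
      using legendre_operator_bernstein_term[of y k "l-k" d] unfolding D1_def D2_def by simp
  qed
  also have "\<dots> = zonal_lap d e l y (1-y) / 2"
    unfolding zonal_lap_def sum.distrib[symmetric] sum_divide_distrib
    by (intro sum.cong refl) (simp add: algebra_simps)
  finally show ?thesis .
qed

lemma even_legendre_sq_at_1: "poly (even_legendre_sq d l) 1 = 1"
  by (simp add: even_legendre_sq_def bernstein_sum_at_1)

lemma even_legendre_sq_ode:
  fixes d y :: real and l :: nat
  assumes "d \<ge> 2"
  defines "R \<equiv> even_legendre_sq d l"
  shows "2*y*(1-y) * poly (pderiv (pderiv R)) y + (1 - d*y) * poly (pderiv R) y
    + real l * (2 * real l + d - 2) * poly R y = 0"
  unfolding R_def even_legendre_sq_def legendre_operator_bernstein_sum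
  using assms(1) by (simp add: zonal_lap_legendre_coeff)

lemma even_legendre_sq_deriv_ode:
  fixes d y :: real and l :: nat
  assumes "d \<ge> 2"
  defines "R \<equiv> even_legendre_sq d l"
  shows "2*y*(1-y) * poly (pderiv (pderiv (pderiv R))) y + (3 - (d+4)*y) * poly (pderiv (pderiv R)) y
    + (real l * (2 * real l + d - 2) - d) * poly (pderiv R) y = 0"
proof -
  define T where "T = smult 2 ([:0,1,-1:] * pderiv (pderiv R)) + [:1,-d:] * pderiv R
    + smult (real l * (2 * real l + d - 2)) R"
  have "poly T z = 0" for z
    using even_legendre_sq_ode[OF assms(1), of z l] unfolding T_def R_def by (simp add: algebra_simps)
  then have "T = 0"
    using poly_all_0_iff_0 by blast
  then have "poly (pderiv T) y = 0"
    by simp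
  moreover have "pderiv [:0,1,-1:] = [:1,-2::real:]" "pderiv [:1,-d:] = [:-d:]"
    by (simp_all add: pderiv_pCons)
  ultimately show ?thesis
    unfolding T_def pderiv_add pderiv_mult pderiv_smult by (simp add: algebra_simps)
qed

lemma deriv_even_legendre_sq_at_1:
  assumes "d \<ge> 2"
  shows "poly (pderiv (even_legendre_sq d l)) 1 = real l * (2 * real l + d - 2) / (d - 1)"
  using even_legendre_sq_ode[OF assms, of 1 l] assms by (simp add: even_legendre_sq_at_1 field_simps)

lemma deriv_even_legendre_sq_at_0:
  assumes "d \<ge> 2"
  shows "poly (pderiv (even_legendre_sq d l)) 0 = - real l * (2 * real l + d - 2) * legendre_coeff d l 0"
  using even_legendre_sq_ode[OF assms, of 0 l] by (simp add: even_legendre_sq_def bernstein_sum_at_0)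

lemma le_max_endpoints_if_deriv_sign:
  fixes E g :: "real \<Rightarrow> real" and a b y :: real
  assumes E': "\<And>z. (E has_real_derivative (a*z - b) * g z) (at z)"
    and "\<And>z. g z \<ge> 0" "a \<ge> 0" "0 \<le> y" "y \<le> 1"
  shows "E y \<le> max (E 0) (E 1)"
proof (cases "a*y \<le> b")
  case True
  have "E y \<le> E 0"
  proof (rule DERIV_nonpos_imp_nonincreasing[OF \<open>0 \<le> y\<close>])
    fix x assume "0 \<le> x" "x \<le> y"
    then have "a*x - b \<le> 0"
      using True mult_left_mono[OF \<open>x \<le> y\<close> \<open>a \<ge> 0\<close>] by linarith
    then show "\<exists>D. (E has_real_derivative D) (at x) \<and> D \<le> 0"
      using E' assms(2) by (blast intro: mult_nonpos_nonneg)
  qed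
  then show ?thesis by simp
next
  case False
  have "E y \<le> E 1"
  proof (rule DERIV_nonneg_imp_nondecreasing[OF \<open>y \<le> 1\<close>])
    fix x assume "y \<le> x" "x \<le> 1"
    then have "a*x - b \<ge> 0"
      using False mult_left_mono[OF \<open>y \<le> x\<close> \<open>a \<ge> 0\<close>] by linarith
    then show "\<exists>D. (E has_real_derivative D) (at x) \<and> D \<ge> 0"
      using E' assms(2) by (blast intro: mult_nonneg_nonneg)
  qed
  then show ?thesis by simp
qed

lemma sq_le_max_endpoints_if_ode:
  fixes S S' S'' :: "real \<Rightarrow> real" and d \<nu> y :: real
  assumes S: "\<And>z. (S has_real_derivative S' z) (at z)"
    and S': "\<And>z. (S' has_real_derivative S'' z) (at z)"
    and ode: "\<And>z. 2*z*(1-z) * S'' z + (3 - (d+4)*z) * S' z + \<nu> * S z = 0"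
    and "\<nu> > 0" "d + 2 \<ge> 0" "0 \<le> y" "y \<le> 1"
  shows "(S y)^2 \<le> max ((S 0)^2) ((S 1)^2)"
proof -
  define E where "E z = (S z)^2 + 2*z*(1-z) * (S' z)^2 / \<nu>" for z
  have E': "(E has_real_derivative (2*(d+2)*z - 4) * ((S' z)^2 / \<nu>)) (at z)" for z
  proof -
    have ode_z: "2*z*(1-z) * S'' z = - (3 - (d+4)*z) * S' z - \<nu> * S z"
      using ode[of z] by (simp add: algebra_simps)
    have "(E has_real_derivative 2 * S z * S' z + (2*(1-2*z) * (S' z)^2 + 2 * S' z * (2*z*(1-z) * S'' z)) / \<nu>) (at z)"
      unfolding E_def[abs_def]
      using \<open>\<nu> > 0\<close> by (auto intro!: derivative_eq_intros S S' simp: field_simps power2_eq_square)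
    also have "2 * S z * S' z + (2*(1-2*z) * (S' z)^2 + 2 * S' z * (2*z*(1-z) * S'' z)) / \<nu>
        = (2*(d+2)*z - 4) * ((S' z)^2 / \<nu>)"
      unfolding ode_z using \<open>\<nu> > 0\<close> by (simp add: field_simps power2_eq_square)
    finally show ?thesis .
  qed
  have "(S y)^2 \<le> E y"
    unfolding E_def using assms(4,6,7) by simp
  also have "E y \<le> max (E 0) (E 1)"
    using assms(4-7) by (intro le_max_endpoints_if_deriv_sign[OF E']) auto
  also have "max (E 0) (E 1) = max ((S 0)^2) ((S 1)^2)"
    unfolding E_def by simp
  finally show ?thesis .
qed

lemma abs_deriv_even_legendre_sq_le:
  fixes d y :: real
  assumes "d \<ge> 2" "l \<ge> 2" "0 \<le> y" "y \<le> 1"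
  shows "\<bar>poly (pderiv (even_legendre_sq d l)) y\<bar> \<le> real l * (2 * real l + d - 2) / (d - 1)"
proof -
  let ?S = "\<lambda>z. poly (pderiv (even_legendre_sq d l)) z"
  define \<kappa> where "\<kappa> = real l * (2 * real l + d - 2)"
  have "\<kappa> > 0"
    unfolding \<kappa>_def using assms(1,2) by (intro mult_pos_pos) auto
  have "\<kappa> - d = (real l - 1) * (2 * real l + d)"
    unfolding \<kappa>_def by (simp add: algebra_simps)
  then have "\<kappa> - d > 0"
    using assms(1,2) by (simp add: mult_pos_pos)
  have S1: "?S 1 = \<kappa> / (d - 1)"
    unfolding \<kappa>_def by (rule deriv_even_legendre_sq_at_1[OF assms(1)])
  have "\<bar>?S 0\<bar> = \<kappa> * \<bar>legendre_coeff d l 0\<bar>"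
    unfolding deriv_even_legendre_sq_at_0[OF assms(1)] \<kappa>_def
    using assms(1) by (simp add: abs_mult)
  also have "\<dots> \<le> \<kappa> * (1 / (d - 1))"
    using abs_legendre_coeff_0_le[OF assms(1)] assms(2) \<open>\<kappa> > 0\<close> by (intro mult_left_mono) auto
  finally have S0: "(?S 0)^2 \<le> (?S 1)^2"
    unfolding S1 by (metis abs_ge_zero power2_abs power_mono times_divide_eq_right mult_1_right)
  have "(?S y)^2 \<le> max ((?S 0)^2) ((?S 1)^2)"
    by (rule sq_le_max_endpoints_if_ode[OF poly_DERIV poly_DERIV even_legendre_sq_deriv_ode[OF assms(1)]
          \<open>\<kappa> - d > 0\<close>[unfolded \<kappa>_def]])
      (use assms in auto)
  also have "\<dots> = (\<kappa> / (d - 1))^2"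
    using S0 S1 by simp
  finally have "\<bar>?S y\<bar>^2 \<le> (\<kappa> / (d - 1))^2"
    by simp
  moreover have "\<kappa> / (d - 1) \<ge> 0"
    using \<open>\<kappa> > 0\<close> assms(1) by simp
  ultimately show ?thesis
    unfolding \<kappa>_def by (rule power2_le_imp_le)
qed

lemma one_minus_even_legendre_sq_le:
  fixes d y :: real
  assumes "d \<ge> 2" "l \<ge> 2" "0 \<le> y" "y \<le> 1"
  shows "1 - poly (even_legendre_sq d l) y \<le> real l * (2 * real l + d - 2) / (d - 1) * (1 - y)"
proof -
  define c where "c = real l * (2 * real l + d - 2) / (d - 1)"
  define f where "f z = poly (even_legendre_sq d l) z + c * (1 - z)" for z
  have "f 1 \<le> f y"
  proof (rule DERIV_nonpos_imp_nonincreasing[OF \<open>y \<le> 1\<close>])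
    fix x assume "y \<le> x" "x \<le> 1"
    then have "poly (pderiv (even_legendre_sq d l)) x - c \<le> 0"
      using abs_deriv_even_legendre_sq_le[OF assms(1,2), of x] assms(3) unfolding c_def by simp
    moreover have "(f has_real_derivative poly (pderiv (even_legendre_sq d l)) x - c) (at x)"
      unfolding f_def[abs_def] by (auto intro!: derivative_eq_intros poly_DERIV)
    ultimately show "\<exists>D. (f has_real_derivative D) (at x) \<and> D \<le> 0"
      by blast
  qed
  then show ?thesis
    unfolding f_def c_def by (simp add: even_legendre_sq_at_1)
qed

theorem proposition7p5:
  fixes x :: real and l :: nat
  assumes "CARD('n::finite) \<ge> 2"
    and "-1 \<le> x" and "x \<le> 1"
    and "l \<ge> 1"
  shows "1 - legendre TYPE('n) (2 * l) x
     \<le> sph_eigenvalue CARD('n) (2 * l) / sph_eigenvalue CARD('n) 2 * (1 - legendre TYPE('n) 2 x)"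
proof (cases "l = 1")
  case True
  then show ?thesis
    using assms(1) by (simp add: sph_eigenvalue_def)
next
  case False
  define d where "d = real CARD('n)"
  have "d \<ge> 2" "l \<ge> 2"
    using assms(1,4) False unfolding d_def by auto
  moreover have "0 \<le> x^2" "x^2 \<le> 1"
    using assms(2,3) by (auto simp: abs_square_le_1)
  ultimately have "1 - legendre TYPE('n) (2 * l) x \<le> real l * (2 * real l + d - 2) / (d - 1) * (1 - x^2)"
    unfolding legendre_even_eq[OF assms(1)] d_def[symmetric] by (rule one_minus_even_legendre_sq_le)
  also have "\<dots> = sph_eigenvalue CARD('n) (2 * l) / sph_eigenvalue CARD('n) 2 * (1 - legendre TYPE('n) 2 x)"
    using \<open>d \<ge> 2\<close> unfolding legendre_2[OF assms(1)] sph_eigenvalue_def d_def[symmetric]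
    by (simp add: field_simps)
  finally show ?thesis .
qed

end
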